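(* Let $p\ge1$, $m\in\mathbb{N}$, $a,b>0$, $\beta\in\mathbb{R}^p$, let $A$ be a real $p\times s$ matrix with $\operatorname{rank}(A)=s\le p$, and let $\xi$ be a design on $\mathcal{X}$. Then $A^T\beta$ is identifiable for $\xi$ in the Poisson–Gamma model (i.e. $A=M(\xi;\beta)H$ for some $H\in\mathbb{R}^{p\times s}$) if and only if $A^T\beta$ is identifiable for $\xi$ in the Poisson model (i.e. $A=M_{Po}(\xi;\beta)H'$ for some $H'\in\mathbb{R}^{p\times s}$).
   Context: Let $\mathcal{X}\subseteq\mathbb{R}^k$ be a design region and $f=(1,f_1,\ldots,f_{p-1})^T:\mathcal{X}\to\mathbb{R}^p$ a vector of regression functions whose first component is the constant 1. A design $\xi$ is a probability measure on $\mathcal{X}$ with finite support $x_1,\ldots,x_l$ and weights $w_1,\ldots,w_l\ge0$, $\sum_j w_j=1$. The Poisson information matrix is $M_{Po}(\xi;\beta)=\sum_{j=1}^l w_j\exp(f(x_j)^T\beta)f(x_j)f(x_j)^T$, and the Poisson–Gamma information matrix is $M(\xi;\beta)=\frac{a}{b}\Bigl(M_{Po}(\xi;\beta)-\frac{M_{Po}(\xi;\beta)e_1e_1^TM_{Po}(\xi;\beta)}{e_1^TM_{Po}(\xi;\beta)e_1+b/m}\Bigr)$, where $e_1$ is the first standard unit vector of $\mathbb{R}^p$. *)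

theory Defs
  imports "HOL-Analysis.Analysis"
begin

definition outer :: "real^'p \<Rightarrow> real^'p \<Rightarrow> real^'p^'p" where
  "outer u v = (\<chi> i j. u $ i * v $ j)"

definition is_design :: "'x set \<Rightarrow> 'x set \<Rightarrow> ('x \<Rightarrow> real) \<Rightarrow> bool" where
  "is_design X S w \<longleftrightarrow> finite S \<and> S \<noteq> {} \<and> S \<subseteq> X \<and> (\<forall>x\<in>S. w x \<ge> 0) \<and> (\<Sum>x\<in>S. w x) = 1"

definition M_Po :: "('x \<Rightarrow> real^'p) \<Rightarrow> 'x set \<Rightarrow> ('x \<Rightarrow> real) \<Rightarrow> real^'p \<Rightarrow> real^'p^'p" where
  "M_Po f S w \<beta> = (\<Sum>x\<in>S. (w x * exp (f x \<bullet> \<beta>)) *\<^sub>R outer (f x) (f x))"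

text \<open>Poisson-Gamma information matrix M(xi; beta); e1 = axis i0 1 is the unit
  vector of the constant regression function.\<close>
definition M_PG :: "real \<Rightarrow> real \<Rightarrow> nat \<Rightarrow> 'p \<Rightarrow> ('x \<Rightarrow> real^'p) \<Rightarrow> 'x set \<Rightarrow> ('x \<Rightarrow> real)
    \<Rightarrow> real^'p \<Rightarrow> real^'p^'p" where
  "M_PG a b m i0 f S w \<beta> =
    (let Mp = M_Po f S w \<beta>; e = axis i0 (1::real) in
     (a / b) *\<^sub>R (Mp - (1 / (e \<bullet> (Mp *v e) + b / real m)) *\<^sub>R (Mp ** outer e e ** Mp)))"

end

theory Submission
  imports Defs
begin

text \<open>The Poisson-Gamma matrix is a rank-one downdate
  \<open>M = k (P - c\<^sup>-\<^sup>1 P e e\<^sup>T P)\<close> of the Poisson matrix \<open>P\<close>, with \<open>c = e\<^sup>T P e + r\<close>, \<open>r = b/m \<noteq> 0\<close>.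
  It factors as \<open>M = P F\<close> with \<open>F = k (I - c\<^sup>-\<^sup>1 e e\<^sup>T P)\<close>, and the Sherman-Morrison identity
  \<open>(P - c\<^sup>-\<^sup>1 P e e\<^sup>T P) (I + r\<^sup>-\<^sup>1 e e\<^sup>T P) = P\<close> gives the converse factorization \<open>P = M G\<close>.
  Hence \<open>M\<close> and \<open>P\<close> have the same column space, and \<open>A = M H\<close> is solvable iff \<open>A = P H'\<close> is.
  No hypothesis on the design, on \<open>A\<close> or on the constant regressor is needed.\<close>

lemma matrix_diff_ldistrib: "(A :: 'a::ring_1^'n^'m) ** (B - C) = A ** B - A ** C"
  by (simp add: matrix_matrix_mult_def vec_eq_iff algebra_simps sum_subtractf)

lemma matrix_diff_rdistrib: "((B :: 'a::ring_1^'n^'m) - C) ** A = B ** A - C ** A"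
  by (simp add: matrix_matrix_mult_def vec_eq_iff algebra_simps sum_subtractf)

lemma matrix_scaleR_right: "(A :: real^'n^'m) ** (k *\<^sub>R B) = k *\<^sub>R (A ** B)"
  by (simp add: matrix_scalar_ac scalar_matrix_assoc)

lemmas matrix_scaleR_left = scalar_matrix_assoc[symmetric]

lemma outer_mult_matrix: "outer u v ** B = outer u (v v* B)"
  by (simp add: outer_def matrix_matrix_mult_def vector_matrix_mult_def vec_eq_iff
      sum_distrib_left mult_ac)

lemma outer_mult_outer: "outer u v ** outer x y = (v \<bullet> x) *\<^sub>R outer u y"
  by (simp add: outer_def matrix_matrix_mult_def inner_vec_def vec_eq_iff
      sum_distrib_left sum_distrib_right mult_ac)

lemma outer_sandwich: "outer u v ** B ** outer x y = (v \<bullet> (B *v x)) *\<^sub>R outer u y"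
proof -
  have "(v v* B) \<bullet> x = v \<bullet> (B *v x)"
    by (simp add: inner_vec_def vector_matrix_mult_def matrix_vector_mult_def
        sum_distrib_left sum_distrib_right mult_ac) (rule sum.swap)
  then show ?thesis
    unfolding outer_mult_matrix[of u v B] outer_mult_outer by simp
qed

lemma rank_one_downdate_factor:
  "(P :: real^'n^'n) - t *\<^sub>R (P ** E ** P) = P ** (mat 1 - t *\<^sub>R (E ** P))"
  by (simp add: matrix_diff_ldistrib matrix_scaleR_left matrix_scaleR_right matrix_mul_assoc)

lemma rank_one_downdate_right_inverse:
  fixes P E :: "real^'n^'n"
  assumes EPE: "E ** P ** E = d *\<^sub>R E" and "r \<noteq> 0" and "d + r \<noteq> 0"
  shows "(P - (1 / (d + r)) *\<^sub>R (P ** E ** P)) ** (mat 1 + (1 / r) *\<^sub>R (E ** P)) = P"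
proof -
  have PEPEP: "P ** E ** P ** E ** P = d *\<^sub>R (P ** E ** P)"
    by (metis EPE matrix_mul_assoc matrix_scaleR_left matrix_scaleR_right)
  have "(P - (1 / (d + r)) *\<^sub>R (P ** E ** P)) ** (mat 1 + (1 / r) *\<^sub>R (E ** P))
      = P + (1 / r - 1 / (d + r) - d / (r * (d + r))) *\<^sub>R (P ** E ** P)"
    by (simp add: matrix_diff_rdistrib matrix_add_ldistrib matrix_scaleR_left
        matrix_scaleR_right matrix_mul_assoc PEPEP algebra_simps)
  also have "1 / r - 1 / (d + r) - d / (r * (d + r)) = 0"
    using assms(2,3) by (simp add: field_simps)
  finally show ?thesis by simp
qed

lemma mutual_factors_same_multiples:
  assumes "M = P ** F" and "P = M ** G"
  shows "(\<exists>H. A = M ** H) \<longleftrightarrow> (\<exists>H. A = P ** H)"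
  using assms by (metis matrix_mul_assoc)

lemma rank_one_downdate_same_multiples:
  fixes P E :: "real^'n^'n" and A :: "real^'s^'n"
  assumes "E ** P ** E = d *\<^sub>R E" and "r \<noteq> 0" and "k \<noteq> 0"
  shows "(\<exists>H. A = (k *\<^sub>R (P - (1 / (d + r)) *\<^sub>R (P ** E ** P))) ** H)
     \<longleftrightarrow> (\<exists>H. A = P ** H)"
proof -
  let ?M = "k *\<^sub>R (P - (1 / (d + r)) *\<^sub>R (P ** E ** P))"
  have "?M = P ** (k *\<^sub>R (mat 1 - (1 / (d + r)) *\<^sub>R (E ** P)))"
    by (simp add: rank_one_downdate_factor matrix_scaleR_right)
  moreover obtain G where "P = ?M ** G"
  proof (cases "d + r = 0")
    case True
    \<comment> \<open>then \<open>1 / (d + r) = 0\<close>, so \<open>?M = k P\<close>\<close>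
    show thesis
      by (rule that[of "(1 / k) *\<^sub>R mat 1"])
        (use True \<open>k \<noteq> 0\<close> in \<open>simp add: matrix_scaleR_left matrix_scaleR_right\<close>)
  next
    case False
    show thesis
      by (rule that[of "(1 / k) *\<^sub>R (mat 1 + (1 / r) *\<^sub>R (E ** P))"])
        (use False assms rank_one_downdate_right_inverse[of E P d r] in
          \<open>simp add: matrix_scaleR_left matrix_scaleR_right\<close>)
  qed
  ultimately show ?thesis
    by (rule mutual_factors_same_multiples)
qed

theorem theorem3:
  fixes X :: "(real^'k) set" and f :: "real^'k \<Rightarrow> real^'p" and i0 :: 'p
    and S :: "(real^'k) set" and w :: "real^'k \<Rightarrow> real"
    and \<beta> :: "real^'p" and A :: "real^'s^'p" and a b :: real and m :: nat
  assumes "\<forall>x\<in>X. f x $ i0 = 1"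
    and "m \<ge> 1" and "a > 0" and "b > 0"
    and "rank A = CARD('s)"
    and "is_design X S w"
  shows "(\<exists>H :: real^'s^'p. A = M_PG a b m i0 f S w \<beta> ** H)
     \<longleftrightarrow> (\<exists>H' :: real^'s^'p. A = M_Po f S w \<beta> ** H')"
proof -
  define P where "P = M_Po f S w \<beta>"
  define e where "e = axis i0 (1::real)"
  have "outer e e ** P ** outer e e = (e \<bullet> (P *v e)) *\<^sub>R outer e e"
    by (rule outer_sandwich)
  moreover have "b / real m \<noteq> 0" and "a / b \<noteq> 0"
    using assms(2-4) by auto
  ultimately show ?thesis
    using rank_one_downdate_same_multiples[where A = A]
    by (simp add: M_PG_def Let_def flip: P_def e_def)
qed

end
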